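(* Let $F$ be a Banach lattice and $\tau$ a uniformly exhaustive linear topology on $F$ weaker than the norm topology. (i) If $E\subset F$ is a closed subspace on which $\tau$ agrees with the norm topology, then $E$ is $n$-dispersed for some $n\in\mathbb{N}$. (ii) If a bounded operator $T:F\to H$ into a Banach space complements $\tau$, then $T$ is $n$-DNS for some $n\in\mathbb{N}$.
   Context: $\tau$ is uniformly exhaustive if for every $\tau$-neighborhood $U$ of $0$ there is $n$ such that there is no pairwise disjoint ($|f|\wedge|g|=0$) $n$-tuple of elements all outside $U$. $T$ complements $\tau$ if no net $(f_p)$ in the unit sphere $\mathrm{S}_F$ is $\tau$-null with $\|Tf_p\|\to0$. For $n\ge2$, $T$ is $n$-DNS if there is $r>0$ such that no pairwise disjoint $f_1,\dots,f_n\in\mathrm{S}_F$ satisfy $\|Tf_k\|\le r$ for all $k$; $E$ is $n$-dispersed if there is $r>0$ such that no pairwise disjoint $f_1,\dots,f_n\in\mathrm{S}_F$ satisfy $d(f_k,E)<r$ for all $k$. *)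

theory Defs
  imports "HOL-Analysis.Analysis"
begin

class banach_lattice = banach + ordered_real_vector + lattice +
  assumes lattice_norm_mono:
    "sup x (- x) \<le> sup y (- y) \<Longrightarrow> norm x \<le> norm y"

definition labs :: "'a::banach_lattice \<Rightarrow> 'a" where
  "labs x = sup x (- x)"

definition ldisjoint :: "'a::banach_lattice \<Rightarrow> 'a \<Rightarrow> bool" where
  "ldisjoint f g \<longleftrightarrow> inf (labs f) (labs g) = 0"

definition pw_disjoint :: "nat \<Rightarrow> (nat \<Rightarrow> 'a::banach_lattice) \<Rightarrow> bool" where
  "pw_disjoint n f \<longleftrightarrow> (\<forall>i<n. \<forall>j<n. i \<noteq> j \<longrightarrow> ldisjoint (f i) (f j))"

definition linear_topology :: "'a::real_normed_vector topology \<Rightarrow> bool" where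
  "linear_topology \<tau> \<longleftrightarrow> topspace \<tau> = UNIV \<and>
     continuous_map (prod_topology \<tau> \<tau>) \<tau> (\<lambda>(x, y). x + y) \<and>
     continuous_map (prod_topology euclideanreal \<tau>) \<tau> (\<lambda>(c, x). c *\<^sub>R x)"

definition weaker_than_norm :: "'a::real_normed_vector topology \<Rightarrow> bool" where
  "weaker_than_norm \<tau> \<longleftrightarrow> (\<forall>U. openin \<tau> U \<longrightarrow> open U)"

definition nhd0 :: "'a::real_normed_vector topology \<Rightarrow> 'a set \<Rightarrow> bool" where
  "nhd0 \<tau> U \<longleftrightarrow> (\<exists>V. openin \<tau> V \<and> 0 \<in> V \<and> V \<subseteq> U)"

definition uniformly_exhaustive :: "'a::banach_lattice topology \<Rightarrow> bool" where
  "uniformly_exhaustive \<tau> \<longleftrightarrow>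
     (\<forall>U. nhd0 \<tau> U \<longrightarrow>
        (\<exists>n::nat. \<not> (\<exists>f. pw_disjoint n f \<and> (\<forall>k<n. f k \<notin> U))))"

text \<open>T complements \<tau>: no net in the unit sphere which is \<tau>-null and along which
  norm (T f) tends to 0.  Nets are represented by proper filters
  (index type 'a suffices, by passing to the image filter).\<close>
definition complements ::
    "('a::banach_lattice \<Rightarrow> 'b::real_normed_vector) \<Rightarrow> 'a topology \<Rightarrow> bool" where
  "complements T \<tau> \<longleftrightarrow>
     \<not> (\<exists>(F::'a filter) (f::'a \<Rightarrow> 'a). F \<noteq> bot \<and> (\<forall>p. norm (f p) = 1) \<and>
           limitin \<tau> f 0 F \<and> ((\<lambda>p. norm (T (f p))) \<longlongrightarrow> 0) F)"

definition n_DNS :: "nat \<Rightarrow> ('a::banach_lattice \<Rightarrow> 'b::real_normed_vector) \<Rightarrow> bool" where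
  "n_DNS n T \<longleftrightarrow> (\<exists>r>0. \<not> (\<exists>f. pw_disjoint n f \<and>
       (\<forall>k<n. norm (f k) = 1 \<and> norm (T (f k)) \<le> r)))"

definition n_dispersed :: "nat \<Rightarrow> 'a::banach_lattice set \<Rightarrow> bool" where
  "n_dispersed n E \<longleftrightarrow> (\<exists>r>0. \<not> (\<exists>f. pw_disjoint n f \<and>
       (\<forall>k<n. norm (f k) = 1 \<and> infdist (f k) E < r)))"

end

theory Submission
  imports Defs
begin

text \<open>Both parts come from one observation: if a \<tau>-neighbourhood U of 0 misses a set S,
  then by uniform exhaustiveness S contains no pairwise disjoint n-tuple for some n.
  For (i), take U with U + U inside a \<tau>-neighbourhood that meets E only in the norm
  ball of radius 1/2; since \<tau> is weaker than the norm, U contains a norm ball, so unit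
  vectors close to E are outside U.  For (ii), if every \<tau>-neighbourhood of 0 contained
  unit vectors with arbitrarily small image under T, these vectors would form a
  \<tau>-null net on the unit sphere along which T tends to 0.\<close>

lemma pw_disjoint_mono: "pw_disjoint m f \<Longrightarrow> n \<le> m \<Longrightarrow> pw_disjoint n f"
  unfolding pw_disjoint_def by auto

lemma uniformly_exhaustive_no_disjoint_tuple:
  assumes "uniformly_exhaustive \<tau>" "openin \<tau> U" "0 \<in> U" "U \<inter> S = {}"
  shows "\<exists>n\<ge>2. \<not> (\<exists>f. pw_disjoint n f \<and> (\<forall>k<n. f k \<in> S))"
proof -
  have "nhd0 \<tau> U" using assms unfolding nhd0_def by blast
  then obtain n where n: "\<not> (\<exists>f. pw_disjoint n f \<and> (\<forall>k<n. f k \<notin> U))"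
    using assms(1) unfolding uniformly_exhaustive_def by blast
  have "\<not> (\<exists>f. pw_disjoint (max n 2) f \<and> (\<forall>k<max n 2. f k \<in> S))"
  proof
    assume "\<exists>f. pw_disjoint (max n 2) f \<and> (\<forall>k<max n 2. f k \<in> S)"
    then obtain f where "pw_disjoint (max n 2) f" "\<forall>k<max n 2. f k \<in> S" by blast
    then have "pw_disjoint n f" "\<forall>k<n. f k \<notin> U"
      using pw_disjoint_mono[of "max n 2" f n] assms(4) by auto
    with n show False by blast
  qed
  then show ?thesis by (intro exI[of _ "max n 2"]) simp
qed

lemma infdist_less_imp_dist_less:
  assumes "infdist x A < r" "A \<noteq> {}"
  shows "\<exists>a\<in>A. dist x a < r"
proof -
  have "(INF a\<in>A. dist x a) < r" using assms by (simp add: infdist_notempty)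
  moreover have "bdd_below ((\<lambda>a. dist x a) ` A)" by (rule bdd_belowI[of _ 0]) auto
  ultimately show ?thesis using assms(2) by (simp add: cINF_less_iff)
qed

lemma linear_topology_sum_nhd:
  assumes "linear_topology \<tau>" "openin \<tau> V" "0 \<in> V"
  obtains W where "openin \<tau> W" "0 \<in> W" "\<And>x y. x \<in> W \<Longrightarrow> y \<in> W \<Longrightarrow> x + y \<in> V"
proof -
  define P where "P = {z \<in> topspace (prod_topology \<tau> \<tau>). (\<lambda>(x, y). x + y) z \<in> V}"
  have top: "topspace \<tau> = UNIV"
    and add: "continuous_map (prod_topology \<tau> \<tau>) \<tau> (\<lambda>(x, y). x + y)"
    using assms(1) unfolding linear_topology_def by blast+
  have P_open: "openin (prod_topology \<tau> \<tau>) P"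
    unfolding P_def using add assms(2) by (rule openin_continuous_map_preimage)
  have zero_in_P: "(0, 0) \<in> P"
    unfolding P_def using top assms(3) by simp
  obtain W1 W2 where W: "openin \<tau> W1" "openin \<tau> W2" "0 \<in> W1" "0 \<in> W2" "W1 \<times> W2 \<subseteq> P"
    using openin_prod_topology_alt[THEN iffD1, OF P_open, rule_format, OF zero_in_P] by blast
  show thesis
  proof (rule that)
    show "openin \<tau> (W1 \<inter> W2)" using W(1,2) by (rule openin_Int)
    show "0 \<in> W1 \<inter> W2" using W(3,4) by blast
  next
    fix x y assume "x \<in> W1 \<inter> W2" "y \<in> W1 \<inter> W2"
    then have "(x, y) \<in> P" using W(5) by blast
    then show "x + y \<in> V" unfolding P_def by simp
  qed
qed

lemma weaker_than_norm_nhd_contains_ball: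
  assumes "weaker_than_norm \<tau>" "openin \<tau> W" "0 \<in> W"
  obtains \<rho> where "\<rho> > 0" "ball 0 \<rho> \<subseteq> W"
  using assms open_contains_ball unfolding weaker_than_norm_def by blast

lemma nhd_avoiding_unit_vectors_near_agreeing_set:
  fixes \<tau> :: "'a::real_normed_vector topology"
  assumes "linear_topology \<tau>" "weaker_than_norm \<tau>"
    and "0 \<in> E" "subtopology \<tau> E = top_of_set E"
  obtains W r where "openin \<tau> W" "0 \<in> W" "r > 0"
    "\<And>f. norm f = 1 \<Longrightarrow> infdist f E < r \<Longrightarrow> f \<notin> W"
proof -
  have "openin (subtopology \<tau> E) (E \<inter> ball 0 (1/2))"
    using assms(4) by (simp add: openin_open_Int)
  then obtain V where V: "openin \<tau> V" "E \<inter> ball 0 (1/2) = V \<inter> E"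
    by (auto simp: openin_subtopology)
  moreover have "0 \<in> E \<inter> ball 0 (1/2)" using assms(3) by simp
  ultimately have "0 \<in> V" by blast
  then obtain W where W: "openin \<tau> W" "0 \<in> W" "\<And>x y. x \<in> W \<Longrightarrow> y \<in> W \<Longrightarrow> x + y \<in> V"
    using linear_topology_sum_nhd[OF assms(1) V(1)] by blast
  obtain \<rho> where \<rho>: "\<rho> > 0" "ball 0 \<rho> \<subseteq> W"
    using weaker_than_norm_nhd_contains_ball[OF assms(2) W(1,2)] by blast
  define r where "r = min \<rho> (1/4)"
  show thesis
  proof (rule that[OF W(1,2)])
    show "r > 0" using \<rho>(1) unfolding r_def by simp
  next
    fix f assume f: "norm f = 1" "infdist f E < r"
    show "f \<notin> W"
    proof
      assume "f \<in> W"
      obtain e where e: "e \<in> E" "dist f e < r"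
        using infdist_less_imp_dist_less[OF f(2)] assms(3) by blast
      then have "norm (e - f) < \<rho>"
        unfolding r_def by (simp add: dist_norm norm_minus_commute)
      then have "e - f \<in> W" using \<rho>(2) by auto
      with \<open>f \<in> W\<close> have "f + (e - f) \<in> V" by (rule W(3))
      then have "e \<in> E \<inter> ball 0 (1/2)" using e(1) V(2) by simp
      then have "norm e < 1/2" by simp
      moreover have "norm f \<le> norm e + dist f e"
        by (metis dist_norm norm_triangle_sub)
      ultimately show False using f(1) e(2) unfolding r_def by linarith
    qed
  qed
qed

text \<open>The \<tau>-null net is the filter generated by the sets S (U, r), directed by
  shrinking both U and r; vectors off the unit sphere are mapped to a fixed x0
  only to make the net total.\<close>
lemma not_complements_if_nhds_contain_small_unit_vectors:
  fixes T :: "'a::banach_lattice \<Rightarrow> 'b::real_normed_vector"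
  assumes top: "topspace \<tau> = UNIV"
    and small: "\<And>U r. openin \<tau> U \<Longrightarrow> 0 \<in> U \<Longrightarrow> r > 0 \<Longrightarrow>
                  \<exists>x\<in>U. norm x = 1 \<and> norm (T x) \<le> r"
  shows "\<not> complements T \<tau>"
proof -
  define B where "B = {(U, r). openin \<tau> U \<and> 0 \<in> U \<and> (r::real) > 0}"
  define S where "S = (\<lambda>(U, r). {x. norm x = 1 \<and> x \<in> U \<and> norm (T x) \<le> r})"
  define F where "F = (INF b\<in>B. principal (S b))"
  have UNIV_in_B: "(UNIV, r) \<in> B" if "r > 0" for r
    using that openin_topspace[of \<tau>] top unfolding B_def by simp
  have directed: "\<exists>c\<in>B. principal (S c) \<le> inf (principal (S a)) (principal (S b))"
    if "a \<in> B" "b \<in> B" for a b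
    using that by (intro bexI[of _ "(fst a \<inter> fst b, min (snd a) (snd b))"])
      (auto simp: B_def S_def)
  then have ev: "eventually P F \<longleftrightarrow> (\<exists>b\<in>B. eventually P (principal (S b)))" for P
    unfolding F_def using UNIV_in_B[of 1] by (intro eventually_INF_base) auto
  have "F \<noteq> bot"
  proof
    assume "F = bot"
    then have "eventually (\<lambda>_. False) F" by simp
    then obtain U r where "(U, r) \<in> B" "S (U, r) = {}"
      unfolding ev by (auto simp: eventually_principal)
    then show False using small unfolding B_def S_def by fastforce
  qed
  obtain x0 :: 'a where x0: "norm x0 = 1" using small[OF _ _ zero_less_one] top by force
  define f where "f = (\<lambda>p::'a. if norm p = 1 then p else x0)"
  have "\<forall>p. norm (f p) = 1" unfolding f_def using x0 by auto
  moreover have "limitin \<tau> f 0 F"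
    unfolding limitin_def
  proof (intro conjI allI impI)
    fix U assume U: "openin \<tau> U \<and> 0 \<in> U"
    then have "(U, 1) \<in> B" unfolding B_def by simp
    moreover have "eventually (\<lambda>x. f x \<in> U) (principal (S (U, 1)))"
      unfolding S_def f_def by (auto simp: eventually_principal)
    ultimately show "eventually (\<lambda>x. f x \<in> U) F" using ev by blast
  qed (simp add: top)
  moreover have "((\<lambda>p. norm (T (f p))) \<longlongrightarrow> 0) F"
  proof (rule tendstoI)
    fix e :: real assume "e > 0"
    then have "eventually (\<lambda>x. dist (norm (T (f x))) 0 < e) (principal (S (UNIV, e/2)))"
      unfolding S_def f_def by (auto simp: eventually_principal)
    then show "eventually (\<lambda>x. dist (norm (T (f x))) 0 < e) F"
      using ev UNIV_in_B[of "e/2"] \<open>e > 0\<close> by auto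
  qed
  ultimately show ?thesis using \<open>F \<noteq> bot\<close> unfolding complements_def by blast
qed

lemma complements_nhd_avoiding_small_unit_vectors:
  fixes T :: "'a::banach_lattice \<Rightarrow> 'b::real_normed_vector"
  assumes "complements T \<tau>" "topspace \<tau> = UNIV"
  obtains U r where "openin \<tau> U" "0 \<in> U" "r > 0"
    "\<And>x. norm x = 1 \<Longrightarrow> norm (T x) \<le> r \<Longrightarrow> x \<notin> U"
proof -
  obtain U r where "openin \<tau> U" "0 \<in> U" "r > 0" "\<not> (\<exists>x\<in>U. norm x = 1 \<and> norm (T x) \<le> r)"
    using not_complements_if_nhds_contain_small_unit_vectors[OF assms(2)] assms(1) by blast
  then show thesis by (intro that) auto
qed

theorem mainTheorem13:
  fixes \<tau> :: "'a::banach_lattice topology"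
  assumes "linear_topology \<tau>" and "uniformly_exhaustive \<tau>" and "weaker_than_norm \<tau>"
  shows "(\<forall>E::'a set. subspace E \<and> closed E \<and> subtopology \<tau> E = top_of_set E
            \<longrightarrow> (\<exists>n\<ge>2. n_dispersed n E))
       \<and> (\<forall>T::'a \<Rightarrow> 'b::banach. bounded_linear T \<and> complements T \<tau>
            \<longrightarrow> (\<exists>n\<ge>2. n_DNS n T))"
proof (intro conjI allI impI)
  fix E :: "'a set"
  assume E: "subspace E \<and> closed E \<and> subtopology \<tau> E = top_of_set E"
  then have "0 \<in> E" "subtopology \<tau> E = top_of_set E" using subspace_0 by blast+
  then obtain W r where W: "openin \<tau> W" "0 \<in> W" "r > 0"
    and far: "\<And>f. norm f = 1 \<Longrightarrow> infdist f E < r \<Longrightarrow> f \<notin> W"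
    by (rule nhd_avoiding_unit_vectors_near_agreeing_set[OF assms(1,3)]) auto
  have "W \<inter> {f. norm f = 1 \<and> infdist f E < r} = {}" using far by blast
  then obtain n where "n \<ge> 2"
    "\<not> (\<exists>f. pw_disjoint n f \<and> (\<forall>k<n. f k \<in> {f. norm f = 1 \<and> infdist f E < r}))"
    using uniformly_exhaustive_no_disjoint_tuple[OF assms(2) W(1,2)] by blast
  then show "\<exists>n\<ge>2. n_dispersed n E"
    using \<open>r > 0\<close> unfolding n_dispersed_def by auto
next
  fix T :: "'a \<Rightarrow> 'b"
  assume "bounded_linear T \<and> complements T \<tau>"
  moreover have "topspace \<tau> = UNIV" using assms(1) unfolding linear_topology_def by blast
  ultimately obtain U r where U: "openin \<tau> U" "0 \<in> U" "r > 0"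
    and far: "\<And>x. norm x = 1 \<Longrightarrow> norm (T x) \<le> r \<Longrightarrow> x \<notin> U"
    using complements_nhd_avoiding_small_unit_vectors by blast
  have "U \<inter> {x. norm x = 1 \<and> norm (T x) \<le> r} = {}" using far by blast
  then obtain n where "n \<ge> 2"
    "\<not> (\<exists>f. pw_disjoint n f \<and> (\<forall>k<n. f k \<in> {x. norm x = 1 \<and> norm (T x) \<le> r}))"
    using uniformly_exhaustive_no_disjoint_tuple[OF assms(2) U(1,2)] by blast
  then show "\<exists>n\<ge>2. n_DNS n T"
    using \<open>r > 0\<close> unfolding n_DNS_def by auto
qed

end
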